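(* The function $h_1(t)=\dfrac{\log^2(1+t)}{\log(1+t^2)}$ is strictly decreasing on $(0,1)$ and strictly increasing on $(1,\infty)$. In particular, $\log^2(1+t)\le\log(1+t^2)$ for $0<t\le1$. *)

theory Defs
  imports Complex_Main
begin

definition h1 :: "real \<Rightarrow> real" where
  "h1 t = (ln (1 + t))\<^sup>2 / ln (1 + t\<^sup>2)"

end

theory Submission
  imports Defs "HOL-Real_Asymp.Real_Asymp"
begin

text \<open>
  With \<open>psi x = (1 + x) ln (1 + x) / x\<close> the derivative of \<open>h1\<close> at \<open>x > 0\<close> is
  \<open>2 ln (1 + x) x\<^sup>2 (psi (x\<^sup>2) - psi x) / ((1 + x) (1 + x\<^sup>2) ln\<^sup>2 (1 + x\<^sup>2))\<close>.
  Since \<open>psi' x = (x - ln (1 + x)) / x\<^sup>2 > 0\<close>, \<open>psi\<close> is strictly increasing, so \<open>h1'\<close>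
  has the sign of \<open>x\<^sup>2 - x\<close>, that is, of \<open>x - 1\<close>.
  For the inequality: \<open>h1\<close> tends to \<open>1\<close> at \<open>0\<^sup>+\<close> and decreases on \<open>(0, 1)\<close>, so
  \<open>h1 \<le> 1\<close> there; at \<open>t = 1\<close> it reads \<open>ln 2 \<le> 1\<close>.
\<close>

definition psi :: "real \<Rightarrow> real" where
  "psi x = (1 + x) * ln (1 + x) / x"

lemma psi_has_real_derivative:
  assumes "x > 0"
  shows "(psi has_real_derivative (x - ln (1 + x)) / x\<^sup>2) (at x)"
proof -
  have "(psi has_real_derivative
          ((ln (1 + x) + 1) * x - (1 + x) * ln (1 + x)) / (x * x)) (at x)"
    unfolding psi_def[abs_def] using assms by (auto intro!: derivative_eq_intros)
  moreover have "(ln (1 + x) + 1) * x - (1 + x) * ln (1 + x) = x - ln (1 + x)"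
    by (simp add: algebra_simps)
  ultimately show ?thesis by (simp add: power2_eq_square)
qed

lemma psi_strict_mono_on: "strict_mono_on {0<..} psi"
proof (rule strict_mono_onI)
  fix a b :: real
  assume "a \<in> {0<..}" "a < b"
  show "psi a < psi b"
  proof (rule DERIV_pos_imp_increasing[OF \<open>a < b\<close>])
    fix x assume "a \<le> x"
    with \<open>a \<in> {0<..}\<close> have "x > 0" by simp
    then have "(x - ln (1 + x)) / x\<^sup>2 > 0"
      using ln_add_one_self_less_self by simp
    with psi_has_real_derivative[OF \<open>x > 0\<close>]
    show "\<exists>D. (psi has_real_derivative D) (at x) \<and> D > 0" by blast
  qed
qed

lemma h1_has_real_derivative:
  assumes "x > 0"
  shows "(h1 has_real_derivative
           2 * ln (1 + x) * (x\<^sup>2 * (psi (x\<^sup>2) - psi x))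
             / ((1 + x) * (1 + x\<^sup>2) * (ln (1 + x\<^sup>2))\<^sup>2)) (at x)"
proof -
  define L M where "L = ln (1 + x)" and "M = ln (1 + x\<^sup>2)"
  have pos: "1 + x > 0" "1 + x\<^sup>2 > 0" "M > 0"
    using assms unfolding M_def by (auto intro: add_pos_nonneg ln_gt_zero)
  have "(h1 has_real_derivative
          (2 * L * (1 / (1 + x)) * M - L\<^sup>2 * (2 * x / (1 + x\<^sup>2))) / (M * M)) (at x)"
    using pos unfolding h1_def[abs_def] L_def M_def
    by (auto intro!: derivative_eq_intros simp: power2_eq_square)
  moreover have "(2 * L * (1 / (1 + x)) * M - L\<^sup>2 * (2 * x / (1 + x\<^sup>2))) / (M * M)
        = 2 * L * ((1 + x\<^sup>2) * M - x * (1 + x) * L) / ((1 + x) * (1 + x\<^sup>2) * M\<^sup>2)"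
    using pos by (simp add: field_simps power2_eq_square)
  moreover have "x\<^sup>2 * (psi (x\<^sup>2) - psi x) = (1 + x\<^sup>2) * M - x * (1 + x) * L"
    using assms unfolding psi_def L_def M_def by (simp add: field_simps power2_eq_square)
  ultimately show ?thesis unfolding L_def M_def by simp
qed

lemma h1_has_derivative_pos_multiple:
  assumes "x > 0"
  obtains c where "c > 0" and "(h1 has_real_derivative c * (psi (x\<^sup>2) - psi x)) (at x)"
proof
  let ?c = "2 * ln (1 + x) * x\<^sup>2 / ((1 + x) * (1 + x\<^sup>2) * (ln (1 + x\<^sup>2))\<^sup>2)"
  have "ln (1 + x) > 0" "ln (1 + x\<^sup>2) > 0" "1 + x\<^sup>2 > 0"
    using assms by (auto intro: add_pos_nonneg ln_gt_zero)
  with assms show "?c > 0"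
    by (intro divide_pos_pos mult_pos_pos) auto
  show "(h1 has_real_derivative ?c * (psi (x\<^sup>2) - psi x)) (at x)"
    using h1_has_real_derivative[OF assms] by (simp add: mult.assoc)
qed

lemma h1_strict_antimono_on: "strict_antimono_on {0<..<1} h1"
proof (rule monotone_onI)
  fix a b :: real
  assume "a \<in> {0<..<1}" "b \<in> {0<..<1}" "a < b"
  show "h1 b < h1 a"
  proof (rule DERIV_neg_imp_decreasing[OF \<open>a < b\<close>])
    fix x assume "a \<le> x" "x \<le> b"
    with \<open>a \<in> {0<..<1}\<close> \<open>b \<in> {0<..<1}\<close> have x: "0 < x" "x < 1" by auto
    then have "psi (x\<^sup>2) < psi x"
      by (intro strict_mono_onD[OF psi_strict_mono_on]) (auto simp: power2_eq_square)
    moreover obtain c where "c > 0" "(h1 has_real_derivative c * (psi (x\<^sup>2) - psi x)) (at x)"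
      using h1_has_derivative_pos_multiple[OF \<open>0 < x\<close>] .
    ultimately show "\<exists>D. (h1 has_real_derivative D) (at x) \<and> D < 0"
      using mult_pos_neg by force
  qed
qed

lemma h1_strict_mono_on: "strict_mono_on {1<..} h1"
proof (rule strict_mono_onI)
  fix a b :: real
  assume "a \<in> {1<..}" "a < b"
  show "h1 a < h1 b"
  proof (rule DERIV_pos_imp_increasing[OF \<open>a < b\<close>])
    fix x assume "a \<le> x"
    with \<open>a \<in> {1<..}\<close> have x: "0 < x" "1 < x" by auto
    then have "psi x < psi (x\<^sup>2)"
      by (intro strict_mono_onD[OF psi_strict_mono_on]) (auto simp: power2_eq_square)
    moreover obtain c where "c > 0" "(h1 has_real_derivative c * (psi (x\<^sup>2) - psi x)) (at x)"
      using h1_has_derivative_pos_multiple[OF \<open>0 < x\<close>] .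
    ultimately show "\<exists>D. (h1 has_real_derivative D) (at x) \<and> D > 0"
      using mult_pos_pos by force
  qed
qed

lemma h1_tendsto_at_right_0: "(h1 \<longlongrightarrow> 1) (at_right 0)"
  unfolding h1_def by real_asymp

lemma h1_le_one:
  assumes "t \<in> {0<..<1}"
  shows "h1 t \<le> 1"
proof (rule tendsto_le[OF trivial_limit_at_right_real h1_tendsto_at_right_0 tendsto_const])
  have "\<forall>\<^sub>F s in at_right 0. s \<in> {0<..<t}"
    using assms by (intro eventually_at_right_real) simp
  then show "\<forall>\<^sub>F s in at_right 0. h1 t \<le> h1 s"
  proof (rule eventually_mono)
    fix s assume "s \<in> {0<..<t}"
    with assms show "h1 t \<le> h1 s"
      using monotone_onD[OF h1_strict_antimono_on] by (simp add: less_imp_le)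
  qed
qed

lemma power2_ln_add_one_le_ln_add_one_power2:
  fixes t :: real
  assumes "0 < t" "t \<le> 1"
  shows "(ln (1 + t))\<^sup>2 \<le> ln (1 + t\<^sup>2)"
proof (cases "t = 1")
  case True
  have "ln 2 \<le> (1 :: real)"
    using ln_le_minus_one[of 2] by simp
  then show ?thesis
    using True by (simp add: power2_eq_square mult_le_cancel_right1)
next
  case False
  with assms have "h1 t \<le> 1" by (intro h1_le_one) simp
  moreover have "ln (1 + t\<^sup>2) > 0"
    using assms by (intro ln_gt_zero) simp
  ultimately show ?thesis
    unfolding h1_def by simp
qed

theorem lemma3p7:
  shows "strict_antimono_on {0<..<1} h1 \<and> strict_mono_on {1<..} h1 \<and>
         (\<forall>t::real. 0 < t \<and> t \<le> 1 \<longrightarrow> (ln (1 + t))\<^sup>2 \<le> ln (1 + t\<^sup>2))"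
  using h1_strict_antimono_on h1_strict_mono_on power2_ln_add_one_le_ln_add_one_power2
  by blast

end
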